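(* Let $K$ be an algebraically closed field of characteristic zero, $m,n\ge1$, and let $G$ be a differential ideal of $K[[t_1,\ldots,t_m]]\{x_1,\ldots,x_n\}$. If $\varphi\in K[[t_1,\ldots,t_m]]^n$ is a solution of $G$ (i.e. $P(\varphi)=0$ for all $P\in G$), then $\operatorname{Supp}(\varphi)$ is a solution of $\operatorname{trop}(G)$.
   Context: Notation: $t^J=t_1^{j_1}\cdots t_m^{j_m}$, $\|J\|_\infty=\max_i j_i$, $\Theta(J)=\partial_{t_1}^{j_1}\cdots\partial_{t_m}^{j_m}$. $K[[t_1,\ldots,t_m]]\{x_1,\ldots,x_n\}$ is the polynomial ring over $K[[t_1,\ldots,t_m]]$ in the indeterminates $x_{i,J}$ ($1\le i\le n$, $J\in\mathbb{Z}_{\ge0}^m$), with derivations $\partial_{t_k}$ extended by $\partial_{t_k}x_{i,J}=x_{i,J+e_k}$; a differential ideal is an ideal stable under these derivations. For $\varphi\in K[[t]]^n$, $P(\varphi)$ is obtained by substituting $\Theta(J)\varphi_i$ for $x_{i,J}$. Every $P$ can be written $P=\sum_{M\in\Delta}\alpha_ME_M$ with $\Delta$ finite, $\alpha_M\in K[[t]]$, and differential monomials $E_M=\prod_{i,\|J\|_\infty\le r}x_{i,J}^{M_{i,J}}$. $\operatorname{Supp}(\sum a_Jt^J)=\{J:a_J\ne0\}$, applied componentwise to tuples. For $X\subseteq\mathbb{Z}_{\ge0}^m$, $\mathcal{N}(X)$ is the convex hull in $\mathbb{R}^m$ of $X+\mathbb{Z}_{\ge0}^m$, $x\in X$ is a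 vertex if $x\notin\mathcal{N}(X\setminus\{x\})$, $\operatorname{Vert}(X)$ is the set of vertices; $\operatorname{trop}(\psi)=\operatorname{Vert}(\operatorname{Supp}\psi)$ for $\psi\in K[[t]]$. Vertex sets form a semiring with $S\oplus T=\operatorname{Vert}(S\cup T)$, $S\odot T=\operatorname{Vert}(S+T)$ (Minkowski sum). $\Theta_{\operatorname{trop}}(J)T=\{(s_1-j_1,\ldots,s_m-j_m):(s_i)\in T, s_i\ge j_i\ \forall i\}$. For $S=(S_1,\dots,S_n)$ subsets of $\mathbb{Z}_{\ge0}^m$, the tropical monomial $\epsilon_M$ evaluates as $\epsilon_M(S)=\operatorname{Vert}\bigl(\sum_{i,J}M_{i,J}\Theta_{\operatorname{trop}}(J)S_i\bigr)$ (Minkowski sums, $kX$ the $k$-fold sum, $0X=\{0\}$). The tropicalization of $P=\sum_{M\in\Delta}\alpha_ME_M$ is the tropical differential polynomial $p=\operatorname{trop}(P)=\bigoplus_{M\in\Delta}a_M\odot\epsilon_M$ with $a_M=\operatorname{trop}(\alpha_M)$ (terms with $\alpha_M=0$ omitted), evaluated as $p(S)=\operatorname{Vert}\bigl(\bigcup_{M\in\Delta}(a_M+\epsilon_M(S))\bigr)$. $S$ is a solution of $p$ if for every $J\in p(S)$ there are $M_1\neq M_2$ in $\Delta$ with $J\in a_{M_1}\odot\epsilon_{M_1}(S)$ and $J\in a_{M_2}\odot\epsilon_{M_2}(S)$ (so if $p(S)=\emptyset$, $S$ is a solution). $\operatorname{trop}(G)=\{\operatorname{trop}(P):P\in G\}$,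 and $S$ is a solution of $\operatorname{trop}(G)$ if it is a solution of every element. *)

theory Defs
  imports "HOL-Analysis.Analysis" "HOL-Computational_Algebra.Polynomial"
begin

definition alg_closed_field :: "'k::field itself \<Rightarrow> bool" where
  "alg_closed_field _ \<longleftrightarrow> (\<forall>p::'k poly. 0 < degree p \<longrightarrow> (\<exists>x. poly p x = 0))"

text \<open>A multi-index J in Z_{>=0}^m is a function 'm => nat; a power series
  sum a_J t^J is its coefficient function.\<close>

type_synonym ('m, 'k) ps = "('m \<Rightarrow> nat) \<Rightarrow> 'k"

definition ps_zero :: "('m, 'k::zero) ps" where
  "ps_zero = (\<lambda>J. 0)"

definition ps_one :: "('m, 'k::{zero,one}) ps" where
  "ps_one = (\<lambda>J. if J = (\<lambda>_. 0) then 1 else 0)"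

definition ps_mult :: "('m::finite, 'k::comm_ring_1) ps \<Rightarrow> ('m, 'k) ps \<Rightarrow> ('m, 'k) ps" where
  "ps_mult f g = (\<lambda>J. \<Sum>A\<in>{A. A \<le> J}. f A * g (\<lambda>i. J i - A i))"

definition ps_pow :: "('m::finite, 'k::comm_ring_1) ps \<Rightarrow> nat \<Rightarrow> ('m, 'k) ps" where
  "ps_pow f k = (ps_mult f ^^ k) ps_one"

definition ps_prod :: "('a \<Rightarrow> ('m::finite, 'k::comm_ring_1) ps) \<Rightarrow> 'a set \<Rightarrow> ('m, 'k) ps" where
  "ps_prod f I = Finite_Set.fold (\<lambda>i acc. ps_mult (f i) acc) ps_one I"

definition ps_deriv :: "'m \<Rightarrow> ('m, 'k::comm_ring_1) ps \<Rightarrow> ('m, 'k) ps" where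
  "ps_deriv k f = (\<lambda>A. of_nat (A k + 1) * f (A(k := A k + 1)))"

definition Theta :: "('m::finite \<Rightarrow> nat) \<Rightarrow> ('m, 'k::comm_ring_1) ps \<Rightarrow> ('m, 'k) ps" where
  "Theta J f = Finite_Set.fold (\<lambda>k g. (ps_deriv k ^^ J k) g) f UNIV"

definition Supp :: "('m, 'k::zero) ps \<Rightarrow> ('m \<Rightarrow> nat) set" where
  "Supp f = {J. f J \<noteq> 0}"

text \<open>The indeterminate x_{i,J} is indexed by (i,J) :: 'n \<times> ('m => nat).
  A differential monomial E_M is given by its exponent function M (finite support),
  a differential polynomial P = sum_M alpha_M E_M by the coefficient map M => alpha_M.\<close>

type_synonym ('n, 'm) dmono = "('n \<times> ('m \<Rightarrow> nat)) \<Rightarrow> nat"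
type_synonym ('n, 'm, 'k) dpoly = "('n, 'm) dmono \<Rightarrow> ('m, 'k) ps"

definition mono_supp :: "('n, 'm) dmono \<Rightarrow> ('n \<times> ('m \<Rightarrow> nat)) set" where
  "mono_supp M = {p. M p \<noteq> 0}"

definition dsupp :: "('n, 'm, 'k::zero) dpoly \<Rightarrow> ('n, 'm) dmono set" where
  "dsupp P = {M. P M \<noteq> ps_zero}"

definition is_dpoly :: "('n, 'm, 'k::zero) dpoly \<Rightarrow> bool" where
  "is_dpoly P \<longleftrightarrow> finite (dsupp P) \<and> (\<forall>M\<in>dsupp P. finite (mono_supp M))"

definition dp_zero :: "('n, 'm, 'k::zero) dpoly" where
  "dp_zero = (\<lambda>M. ps_zero)"

definition dp_add :: "('n, 'm, 'k::comm_ring_1) dpoly \<Rightarrow> ('n, 'm, 'k) dpoly \<Rightarrow> ('n, 'm, 'k) dpoly" where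
  "dp_add P Q = (\<lambda>M J. P M J + Q M J)"

definition dp_neg :: "('n, 'm, 'k::comm_ring_1) dpoly \<Rightarrow> ('n, 'm, 'k) dpoly" where
  "dp_neg P = (\<lambda>M J. - P M J)"

definition dp_mult :: "('n, 'm::finite, 'k::comm_ring_1) dpoly \<Rightarrow> ('n, 'm, 'k) dpoly \<Rightarrow> ('n, 'm, 'k) dpoly" where
  "dp_mult P Q = (\<lambda>N J. \<Sum>M1\<in>dsupp P. \<Sum>M2\<in>dsupp Q.
      if N = (\<lambda>p. M1 p + M2 p) then ps_mult (P M1) (Q M2) J else 0)"

text \<open>The derivation d_{t_k}, extended by d_{t_k} x_{i,J} = x_{i,J+e_k}:
  d(alpha E_M) = (d alpha) E_M + sum_{(i,J), M(i,J)>0} M(i,J) alpha E_{M - e_{(i,J)} + e_{(i,J+e_k)}}\<close>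
definition mono_shift :: "'m \<Rightarrow> ('n \<times> ('m \<Rightarrow> nat)) \<Rightarrow> ('n, 'm) dmono \<Rightarrow> ('n, 'm) dmono" where
  "mono_shift k p M =
     (let M' = M(p := M p - 1); q = (fst p, (snd p)(k := snd p k + 1)) in M'(q := M' q + 1))"

definition dp_deriv :: "'m \<Rightarrow> ('n, 'm, 'k::comm_ring_1) dpoly \<Rightarrow> ('n, 'm, 'k) dpoly" where
  "dp_deriv k P = (\<lambda>N J. ps_deriv k (P N) J +
      (\<Sum>M\<in>dsupp P. \<Sum>p\<in>mono_supp M.
          if N = mono_shift k p M then of_nat (M p) * P M J else 0))"

definition differential_ideal :: "('n, 'm::finite, 'k::comm_ring_1) dpoly set \<Rightarrow> bool" where
  "differential_ideal G \<longleftrightarrow>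
     G \<subseteq> {P. is_dpoly P} \<and> dp_zero \<in> G \<and>
     (\<forall>P\<in>G. \<forall>Q\<in>G. dp_add P Q \<in> G) \<and>
     (\<forall>P\<in>G. dp_neg P \<in> G) \<and>
     (\<forall>P\<in>G. \<forall>Q. is_dpoly Q \<longrightarrow> dp_mult Q P \<in> G) \<and>
     (\<forall>P\<in>G. \<forall>k. dp_deriv k P \<in> G)"

definition mono_eval :: "('n, 'm::finite) dmono \<Rightarrow> ('n \<Rightarrow> ('m, 'k::comm_ring_1) ps) \<Rightarrow> ('m, 'k) ps" where
  "mono_eval M \<phi> = ps_prod (\<lambda>p. ps_pow (Theta (snd p) (\<phi> (fst p))) (M p)) (mono_supp M)"

definition dp_eval :: "('n, 'm::finite, 'k::comm_ring_1) dpoly \<Rightarrow> ('n \<Rightarrow> ('m, 'k) ps) \<Rightarrow> ('m, 'k) ps" where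
  "dp_eval P \<phi> = (\<lambda>J. \<Sum>M\<in>dsupp P. ps_mult (P M) (mono_eval M \<phi>) J)"

definition embed :: "('m::finite \<Rightarrow> nat) \<Rightarrow> real ^ 'm" where
  "embed J = (\<chi> i. real (J i))"

definition Newton :: "('m::finite \<Rightarrow> nat) set \<Rightarrow> (real ^ 'm) set" where
  "Newton X = convex hull {embed (\<lambda>i. x i + d i) | x d. x \<in> X}"

definition Vert :: "('m::finite \<Rightarrow> nat) set \<Rightarrow> ('m \<Rightarrow> nat) set" where
  "Vert X = {x \<in> X. embed x \<notin> Newton (X - {x})}"

definition trop_ps :: "('m::finite, 'k::zero) ps \<Rightarrow> ('m \<Rightarrow> nat) set" where
  "trop_ps f = Vert (Supp f)"

definition msum :: "('m \<Rightarrow> nat) set \<Rightarrow> ('m \<Rightarrow> nat) set \<Rightarrow> ('m \<Rightarrow> nat) set" where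
  "msum A B = {(\<lambda>i. a i + b i) | a b. a \<in> A \<and> b \<in> B}"

definition msum_fin :: "'a set \<Rightarrow> ('a \<Rightarrow> ('m \<Rightarrow> nat) set) \<Rightarrow> ('m \<Rightarrow> nat) set" where
  "msum_fin I A = {(\<lambda>i. \<Sum>p\<in>I. g p i) | g. \<forall>p\<in>I. g p \<in> A p}"

text \<open>k-fold Minkowski sum kX, with 0X = {0}\<close>
definition kfold :: "nat \<Rightarrow> ('m \<Rightarrow> nat) set \<Rightarrow> ('m \<Rightarrow> nat) set" where
  "kfold k X = msum_fin {..<k} (\<lambda>_. X)"

definition Theta_trop :: "('m \<Rightarrow> nat) \<Rightarrow> ('m \<Rightarrow> nat) set \<Rightarrow> ('m \<Rightarrow> nat) set" where
  "Theta_trop J T = {(\<lambda>i. s i - J i) | s. s \<in> T \<and> (\<forall>i. J i \<le> s i)}"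

definition trop_mono_eval :: "('n, 'm::finite) dmono \<Rightarrow> ('n \<Rightarrow> ('m \<Rightarrow> nat) set) \<Rightarrow> ('m \<Rightarrow> nat) set" where
  "trop_mono_eval M S =
     Vert (msum_fin (mono_supp M) (\<lambda>p. kfold (M p) (Theta_trop (snd p) (S (fst p)))))"

definition trop_term_eval :: "('n, 'm::finite, 'k::zero) dpoly \<Rightarrow> ('n, 'm) dmono \<Rightarrow> ('n \<Rightarrow> ('m \<Rightarrow> nat) set) \<Rightarrow> ('m \<Rightarrow> nat) set" where
  "trop_term_eval P M S = Vert (msum (trop_ps (P M)) (trop_mono_eval M S))"

definition trop_eval :: "('n, 'm::finite, 'k::zero) dpoly \<Rightarrow> ('n \<Rightarrow> ('m \<Rightarrow> nat) set) \<Rightarrow> ('m \<Rightarrow> nat) set" where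
  "trop_eval P S = Vert (\<Union>M\<in>dsupp P. msum (trop_ps (P M)) (trop_mono_eval M S))"

definition trop_solution :: "('n, 'm::finite, 'k::zero) dpoly \<Rightarrow> ('n \<Rightarrow> ('m \<Rightarrow> nat) set) \<Rightarrow> bool" where
  "trop_solution P S \<longleftrightarrow> (\<forall>J\<in>trop_eval P S. \<exists>M1\<in>dsupp P. \<exists>M2\<in>dsupp P.
      M1 \<noteq> M2 \<and> J \<in> trop_term_eval P M1 S \<and> J \<in> trop_term_eval P M2 S)"

end

theory Submission
  imports Defs
begin

text \<open>Fix a point \<open>J\<close> of \<open>p(S)\<close>. As a vertex of the union \<open>U\<close> of the terms
  \<open>a\<^sub>M \<odot> \<epsilon>\<^sub>M(S)\<close>, \<open>J\<close> is the unique minimizer on \<open>U\<close> of a positive integer weight, which can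
  moreover be chosen injective on all exponents of weight at most that of \<open>J\<close> (separate \<open>J\<close> from
  the Newton polyhedron of the other points, round, then perturb by a base-\<open>B\<close> digit weight).
  For such a weight, lowest terms of power series multiply, lowest points of Minkowski sums add,
  and \<open>Supp (Theta J \<phi>) = Theta_trop J (Supp \<phi>)\<close> in characteristic zero. Hence \<open>J\<close> lies in the term
  of \<open>M\<close> exactly when the coefficient of \<open>t\<^sup>J\<close> in \<open>\<alpha>\<^sub>M E\<^sub>M(\<phi>)\<close> is nonzero. These coefficients
  sum to the coefficient of \<open>t\<^sup>J\<close> in \<open>P(\<phi>) = 0\<close>, so at least two of them are nonzero.\<close>

section \<open>Power series arithmetic\<close>

lemma finite_le_fun: "finite {A::'m::finite \<Rightarrow> nat. A \<le> J}"
proof (rule finite_subset)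
  show "{A::'m \<Rightarrow> nat. A \<le> J} \<subseteq> (\<Pi>\<^sub>E i\<in>UNIV. {..J i})"
    by (auto simp: le_fun_def PiE_def extensional_def)
qed (rule finite_PiE; simp)

lemma ps_mult_commute: "ps_mult f g = ps_mult g (f::('m::finite, 'k::comm_ring_1) ps)"
proof
  fix J
  show "ps_mult f g J = ps_mult g f J"
    unfolding ps_mult_def
    by (rule sum.reindex_bij_witness[where i="\<lambda>A i. J i - A i" and j="\<lambda>A i. J i - A i"])
       (auto simp: le_fun_def mult.commute)
qed

lemma ps_mult_assoc:
  "ps_mult (ps_mult f g) h = ps_mult f (ps_mult g (h::('m::finite, 'k::comm_ring_1) ps))"
proof
  fix J :: "'m \<Rightarrow> nat"
  have "ps_mult (ps_mult f g) h J =
     (\<Sum>(A, B)\<in>Sigma {A. A \<le> J} (\<lambda>A. {B. B \<le> A}). f B * g (\<lambda>i. A i - B i) * h (\<lambda>i. J i - A i))"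
    unfolding ps_mult_def by (simp add: sum_distrib_right sum.Sigma finite_le_fun)
  also have "\<dots> = (\<Sum>(B, C)\<in>Sigma {B. B \<le> J} (\<lambda>B. {C. C \<le> (\<lambda>i. J i - B i)}).
                    f B * (g C * h (\<lambda>i. J i - B i - C i)))"
    by (rule sum.reindex_bij_witness[where i="\<lambda>(B, C). (\<lambda>i. B i + C i, B)"
                                       and j="\<lambda>(A, B). (B, \<lambda>i. A i - B i)"])
       (auto simp: le_fun_def mult.assoc le_diff_conv2 add.commute intro: order_trans diff_le_mono)
  also have "\<dots> = ps_mult f (ps_mult g h) J"
    unfolding ps_mult_def by (simp add: sum_distrib_left sum.Sigma finite_le_fun)
  finally show "ps_mult (ps_mult f g) h J = ps_mult f (ps_mult g h) J" .
qed

lemma ps_prod_insert: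
  fixes F :: "'a \<Rightarrow> ('m::finite, 'k::comm_ring_1) ps"
  assumes "finite I" "p \<notin> I"
  shows "ps_prod F (insert p I) = ps_mult (F p) (ps_prod F I)"
proof -
  interpret comp_fun_commute "\<lambda>i acc. ps_mult (F i) acc"
  proof
    fix x y
    show "(\<lambda>acc. ps_mult (F y) acc) \<circ> (\<lambda>acc. ps_mult (F x) acc) =
          (\<lambda>acc. ps_mult (F x) acc) \<circ> (\<lambda>acc. ps_mult (F y) acc)"
      by (rule ext) (simp add: ps_mult_assoc[symmetric] ps_mult_commute[of "F x"])
  qed
  show ?thesis
    using assms unfolding ps_prod_def by simp
qed

section \<open>Weights and unique minimizers\<close>

definition weight :: "('m::finite \<Rightarrow> nat) \<Rightarrow> ('m \<Rightarrow> nat) \<Rightarrow> nat" where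
  "weight v x = (\<Sum>k\<in>UNIV. v k * x k)"

definition unique_minimizer :: "('m::finite \<Rightarrow> nat) \<Rightarrow> ('m \<Rightarrow> nat) set \<Rightarrow> ('m \<Rightarrow> nat) \<Rightarrow> bool" where
  "unique_minimizer v X a \<longleftrightarrow> a \<in> X \<and> (\<forall>x\<in>X. x \<noteq> a \<longrightarrow> weight v a < weight v x)"

lemma weight_add: "weight v (\<lambda>i. a i + b i) = weight v a + weight v b"
  unfolding weight_def by (simp add: algebra_simps sum.distrib)

lemma unique_minimizer_unique:
  "unique_minimizer v X a \<Longrightarrow> unique_minimizer v X b \<Longrightarrow> a = b"
  unfolding unique_minimizer_def by force

lemma unique_minimizer_exists:
  assumes "y \<in> Y" "weight v y \<le> c" "inj_on (weight v) {x. weight v x \<le> c}"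
  obtains z where "unique_minimizer v Y z" "weight v z \<le> weight v y"
proof -
  obtain z where z: "z \<in> Y" "\<forall>x\<in>Y. weight v z \<le> weight v x"
    using ex_has_least_nat[of "\<lambda>x. x \<in> Y" y "weight v"] assms(1) by blast
  have "weight v z < weight v x" if "x \<in> Y" "x \<noteq> z" for x
  proof -
    have "weight v z \<le> weight v y" "weight v z \<le> weight v x"
      using z that assms(1) by auto
    moreover have "weight v z \<noteq> weight v x"
      using inj_onD[OF assms(3), of z x] \<open>weight v z \<le> weight v y\<close> assms(2) that(2) by auto
    ultimately show ?thesis by simp
  qed
  with z assms(1) show thesis by (intro that) (auto simp: unique_minimizer_def)
qed

section \<open>Minkowski sums\<close>

lemma unique_minimizer_msum_decomp:
  assumes "unique_minimizer v A a" "unique_minimizer v B b" "a' \<in> A" "b' \<in> B"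
    and "weight v (\<lambda>i. a' i + b' i) \<le> weight v (\<lambda>i. a i + b i)"
  shows "a' = a" "b' = b"
proof -
  have "weight v a \<le> weight v a'" "weight v b \<le> weight v b'"
    using assms(1-4) unfolding unique_minimizer_def by (metis order.strict_implies_order order_refl)+
  then show "a' = a" "b' = b"
    using assms unfolding unique_minimizer_def weight_add by (metis add_mono_thms_linordered_field not_le)+
qed

lemma unique_minimizer_msum:
  assumes "unique_minimizer v A a" "unique_minimizer v B b"
  shows "unique_minimizer v (msum A B) (\<lambda>i. a i + b i)"
  unfolding unique_minimizer_def
proof (intro conjI ballI impI)
  show "(\<lambda>i. a i + b i) \<in> msum A B"
    using assms unfolding unique_minimizer_def msum_def by blast
next
  fix x assume "x \<in> msum A B" "x \<noteq> (\<lambda>i. a i + b i)"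
  then show "weight v (\<lambda>i. a i + b i) < weight v x"
    using unique_minimizer_msum_decomp[OF assms] unfolding msum_def by (force simp: not_less)
qed

lemma unique_minimizer_msumD:
  assumes "unique_minimizer v (msum A B) z"
  obtains a b where "unique_minimizer v A a" "unique_minimizer v B b" "z = (\<lambda>i. a i + b i)"
proof -
  obtain a b where ab: "a \<in> A" "b \<in> B" "z = (\<lambda>i. a i + b i)"
    using assms unfolding unique_minimizer_def msum_def by blast
  have "weight v a < weight v a'" if "a' \<in> A" "a' \<noteq> a" for a'
  proof -
    have "(\<lambda>i. a' i + b i) \<in> msum A B" "(\<lambda>i. a' i + b i) \<noteq> z"
      using that ab unfolding msum_def by (auto simp: fun_eq_iff)
    then show ?thesis
      using assms ab unfolding unique_minimizer_def by (auto simp: weight_add)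
  qed
  moreover have "weight v b < weight v b'" if "b' \<in> B" "b' \<noteq> b" for b'
  proof -
    have "(\<lambda>i. a i + b' i) \<in> msum A B" "(\<lambda>i. a i + b' i) \<noteq> z"
      using that ab unfolding msum_def by (auto simp: fun_eq_iff)
    then show ?thesis
      using assms ab unfolding unique_minimizer_def by (auto simp: weight_add)
  qed
  ultimately show thesis
    using ab by (intro that) (auto simp: unique_minimizer_def)
qed

lemma msum_mono: "A \<subseteq> A' \<Longrightarrow> B \<subseteq> B' \<Longrightarrow> msum A B \<subseteq> msum A' B'"
  unfolding msum_def by blast

lemma msum_fin_mono: "(\<And>p. p \<in> I \<Longrightarrow> X p \<subseteq> Y p) \<Longrightarrow> msum_fin I X \<subseteq> msum_fin I Y"
  unfolding msum_fin_def by blast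

lemma msum_fin_insert:
  assumes "finite I" "p \<notin> I"
  shows "msum_fin (insert p I) X = msum (X p) (msum_fin I X)"
proof (intro set_eqI iffI)
  fix t assume "t \<in> msum_fin (insert p I) X"
  then obtain g where g: "t = (\<lambda>i. \<Sum>q\<in>insert p I. g q i)" "\<forall>q\<in>insert p I. g q \<in> X q"
    unfolding msum_fin_def by auto
  then have "t = (\<lambda>i. g p i + (\<Sum>q\<in>I. g q i))" "(\<lambda>i. \<Sum>q\<in>I. g q i) \<in> msum_fin I X"
    using assms unfolding msum_fin_def by auto
  with g show "t \<in> msum (X p) (msum_fin I X)"
    unfolding msum_def by (intro CollectI exI[of _ "g p"] exI[of _ "\<lambda>i. \<Sum>q\<in>I. g q i"]) auto
next
  fix t assume "t \<in> msum (X p) (msum_fin I X)"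
  then obtain a g where ag: "t = (\<lambda>i. a i + (\<Sum>q\<in>I. g q i))" "a \<in> X p" "\<forall>q\<in>I. g q \<in> X q"
    unfolding msum_def msum_fin_def by auto
  have "(\<Sum>q\<in>I. (g(p := a)) q i) = (\<Sum>q\<in>I. g q i)" for i
    using assms by (intro sum.cong) auto
  then have "t = (\<lambda>i. \<Sum>q\<in>insert p I. (g(p := a)) q i)"
    using assms ag by simp
  moreover have "\<forall>q\<in>insert p I. (g(p := a)) q \<in> X q"
    using ag by auto
  ultimately show "t \<in> msum_fin (insert p I) X"
    unfolding msum_fin_def by blast
qed

lemma unique_minimizer_msum_finD:
  assumes "finite I" "unique_minimizer v (msum_fin I X) z"
  shows "\<exists>m. (\<forall>p\<in>I. unique_minimizer v (X p) (m p)) \<and> z = (\<lambda>i. \<Sum>p\<in>I. m p i)"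
  using assms
proof (induction I arbitrary: z rule: finite_induct)
  case empty
  then show ?case by (simp add: msum_fin_def unique_minimizer_def)
next
  case (insert p I)
  obtain a b where ab: "unique_minimizer v (X p) a" "unique_minimizer v (msum_fin I X) b"
    "z = (\<lambda>i. a i + b i)"
    using insert.prems insert.hyps by (auto simp: msum_fin_insert elim: unique_minimizer_msumD)
  obtain m where m: "\<forall>q\<in>I. unique_minimizer v (X q) (m q)" "b = (\<lambda>i. \<Sum>q\<in>I. m q i)"
    using insert.IH[OF ab(2)] by blast
  have "(\<Sum>q\<in>I. (m(p := a)) q i) = (\<Sum>q\<in>I. m q i)" for i
    using insert.hyps by (intro sum.cong) auto
  then have "z = (\<lambda>i. \<Sum>q\<in>insert p I. (m(p := a)) q i)"
    using insert.hyps ab(3) m(2) by simp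
  with ab(1) m(1) show ?case by (intro exI[of _ "m(p := a)"]) auto
qed

lemma kfold_0: "kfold 0 X = {\<lambda>i. 0}"
  unfolding kfold_def msum_fin_def by auto

lemma kfold_Suc: "kfold (Suc k) X = msum X (kfold k X)"
  unfolding kfold_def by (simp add: lessThan_Suc msum_fin_insert)

lemma unique_minimizer_kfoldD:
  assumes "unique_minimizer v (kfold k X) z" "0 < k"
  shows "\<exists>a. unique_minimizer v X a \<and> z = (\<lambda>i. k * a i)"
  using assms
proof (induction k arbitrary: z)
  case 0
  then show ?case by simp
next
  case (Suc k)
  obtain a b where ab: "unique_minimizer v X a" "unique_minimizer v (kfold k X) b"
    "z = (\<lambda>i. a i + b i)"
    using Suc.prems(1) by (auto simp: kfold_Suc elim: unique_minimizer_msumD)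
  have "b = (\<lambda>i. k * a i)"
  proof (cases "k = 0")
    case True
    then show ?thesis using ab(2) by (simp add: kfold_0 unique_minimizer_def)
  next
    case False
    then obtain a' where "unique_minimizer v X a'" "b = (\<lambda>i. k * a' i)"
      using Suc.IH[OF ab(2)] by blast
    then show ?thesis using unique_minimizer_unique[OF ab(1)] by blast
  qed
  with ab show ?case by auto
qed

section \<open>Lowest terms of power series\<close>

lemma Supp_ps_mult_subset: "Supp (ps_mult f g) \<subseteq> msum (Supp f) (Supp g)"
proof
  fix y assume "y \<in> Supp (ps_mult f g)"
  then obtain A where A: "A \<le> y" "f A * g (\<lambda>i. y i - A i) \<noteq> 0"
    unfolding Supp_def ps_mult_def by (auto elim: sum.not_neutral_contains_not_neutral)
  then have "y = (\<lambda>i. A i + (y i - A i))" by (auto simp: le_fun_def)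
  with A show "y \<in> msum (Supp f) (Supp g)"
    unfolding msum_def Supp_def by fastforce
qed

lemma ps_mult_lowest_coeff:
  fixes f g :: "('m::finite, 'k::comm_ring_1) ps"
  assumes "unique_minimizer v (Supp f) a" "unique_minimizer v (Supp g) b"
  shows "ps_mult f g (\<lambda>i. a i + b i) = f a * g b"
proof -
  let ?y = "\<lambda>i. a i + b i"
  have "f A * g (\<lambda>i. ?y i - A i) = 0" if "A \<le> ?y" "A \<noteq> a" for A
  proof (rule ccontr)
    assume "f A * g (\<lambda>i. ?y i - A i) \<noteq> 0"
    then have "A \<in> Supp f" "(\<lambda>i. ?y i - A i) \<in> Supp g" by (auto simp: Supp_def)
    moreover have "(\<lambda>i. A i + (?y i - A i)) = ?y"
      using that(1) by (auto simp: le_fun_def)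
    ultimately show False
      using unique_minimizer_msum_decomp(1)[OF assms] that(2) by fastforce
  qed
  moreover have "a \<in> {A. A \<le> ?y}" "(\<lambda>i. ?y i - a i) = b"
    by (auto simp: le_fun_def)
  ultimately show ?thesis
    unfolding ps_mult_def by (subst sum.remove[of _ a]) (auto simp: finite_le_fun intro: sum.neutral)
qed

lemma unique_minimizer_ps_mult:
  fixes f g :: "('m::finite, 'k::idom) ps"
  assumes "unique_minimizer v (Supp f) a" "unique_minimizer v (Supp g) b"
  shows "unique_minimizer v (Supp (ps_mult f g)) (\<lambda>i. a i + b i)"
proof -
  have "ps_mult f g (\<lambda>i. a i + b i) \<noteq> 0"
    using ps_mult_lowest_coeff[OF assms] assms by (simp add: unique_minimizer_def Supp_def)
  then show ?thesis
    using unique_minimizer_msum[OF assms] Supp_ps_mult_subset[of f g]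
    unfolding unique_minimizer_def by (auto simp: Supp_def)
qed

lemma Supp_ps_one: "Supp (ps_one :: ('m, 'k::comm_ring_1) ps) = {\<lambda>i. 0}"
  unfolding Supp_def ps_one_def by auto

lemma unique_minimizer_ps_one: "unique_minimizer v (Supp (ps_one :: ('m::finite, 'k::comm_ring_1) ps)) (\<lambda>i. 0)"
  unfolding Supp_ps_one unique_minimizer_def by auto

lemma Supp_ps_prod_subset:
  fixes F :: "'a \<Rightarrow> ('m::finite, 'k::comm_ring_1) ps"
  assumes "finite I"
  shows "Supp (ps_prod F I) \<subseteq> msum_fin I (\<lambda>p. Supp (F p))"
  using assms
proof (induction I rule: finite_induct)
  case empty
  then show ?case by (simp add: ps_prod_def Supp_ps_one msum_fin_def)
next
  case (insert p I)
  then have "Supp (ps_prod F (insert p I)) \<subseteq> msum (Supp (F p)) (Supp (ps_prod F I))"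
    by (simp add: ps_prod_insert Supp_ps_mult_subset)
  also have "\<dots> \<subseteq> msum (Supp (F p)) (msum_fin I (\<lambda>p. Supp (F p)))"
    using insert.IH by (rule msum_mono[OF order_refl])
  finally show ?case using insert.hyps by (simp add: msum_fin_insert)
qed

lemma unique_minimizer_ps_prod:
  fixes F :: "'a \<Rightarrow> ('m::finite, 'k::idom) ps"
  assumes "finite I" "\<forall>p\<in>I. unique_minimizer v (Supp (F p)) (m p)"
  shows "unique_minimizer v (Supp (ps_prod F I)) (\<lambda>i. \<Sum>p\<in>I. m p i)"
  using assms
proof (induction I rule: finite_induct)
  case empty
  then show ?case by (simp add: ps_prod_def unique_minimizer_ps_one)
next
  case (insert p I)
  then show ?case
    using unique_minimizer_ps_mult[of v "F p" "m p" "ps_prod F I"] by (simp add: ps_prod_insert)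
qed

lemma Supp_ps_pow_subset: "Supp (ps_pow f k) \<subseteq> kfold k (Supp (f::('m::finite, 'k::comm_ring_1) ps))"
proof (induction k)
  case 0
  then show ?case by (simp add: ps_pow_def Supp_ps_one kfold_0)
next
  case (Suc k)
  have "Supp (ps_pow f (Suc k)) \<subseteq> msum (Supp f) (Supp (ps_pow f k))"
    by (simp add: ps_pow_def Supp_ps_mult_subset)
  also have "\<dots> \<subseteq> msum (Supp f) (kfold k (Supp f))"
    using Suc.IH by (rule msum_mono[OF order_refl])
  finally show ?case by (simp add: kfold_Suc)
qed

lemma unique_minimizer_ps_pow:
  fixes f :: "('m::finite, 'k::idom) ps"
  assumes "unique_minimizer v (Supp f) a"
  shows "unique_minimizer v (Supp (ps_pow f k)) (\<lambda>i. k * a i)"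
proof (induction k)
  case 0
  then show ?case by (simp add: ps_pow_def unique_minimizer_ps_one)
next
  case (Suc k)
  then show ?case
    using unique_minimizer_ps_mult[OF assms] by (simp add: ps_pow_def)
qed

section \<open>Supports of derivatives\<close>

lemma ps_deriv_commute: "ps_deriv k \<circ> ps_deriv l = ps_deriv l \<circ> (ps_deriv k :: ('m, 'k::comm_ring_1) ps \<Rightarrow> _)"
  by (cases "k = l") (auto simp: fun_eq_iff ps_deriv_def fun_upd_twist algebra_simps)

lemma ps_deriv_funpow_nonzero_iff:
  fixes g :: "('m, 'k::field_char_0) ps"
  shows "(ps_deriv k ^^ n) g A \<noteq> 0 \<longleftrightarrow> g (A(k := A k + n)) \<noteq> 0"
proof (induction n arbitrary: A)
  case 0
  then show ?case by simp
next
  case (Suc n)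
  have "(of_nat (A k + 1) :: 'k) \<noteq> 0" by (simp del: of_nat_Suc)
  then have "(ps_deriv k ^^ Suc n) g A \<noteq> 0 \<longleftrightarrow> (ps_deriv k ^^ n) g (A(k := A k + 1)) \<noteq> 0"
    by (simp add: ps_deriv_def)
  also have "\<dots> \<longleftrightarrow> g ((A(k := A k + 1))(k := (A(k := A k + 1)) k + n)) \<noteq> 0"
    by (rule Suc.IH)
  also have "(A(k := A k + 1))(k := (A(k := A k + 1)) k + n) = A(k := A k + Suc n)"
    by simp
  finally show ?case .
qed

lemma Theta_nonzero_iff:
  fixes f :: "('m::finite, 'k::field_char_0) ps"
  shows "Theta J f A \<noteq> 0 \<longleftrightarrow> f (\<lambda>i. A i + J i) \<noteq> 0"
proof -
  interpret comp_fun_commute "\<lambda>k. ps_deriv k ^^ J k"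
    by (rule comp_fun_commute.comp_fun_commute_funpow) (standard, rule ps_deriv_commute)
  have "Finite_Set.fold (\<lambda>k. ps_deriv k ^^ J k) f K A \<noteq> 0 \<longleftrightarrow>
        f (\<lambda>i. A i + (if i \<in> K then J i else 0)) \<noteq> 0" if "finite K" for K
    using that
  proof (induction K arbitrary: A rule: finite_induct)
    case empty
    then show ?case by simp
  next
    case (insert k K)
    then have "Finite_Set.fold (\<lambda>k. ps_deriv k ^^ J k) f (insert k K) A \<noteq> 0 \<longleftrightarrow>
               Finite_Set.fold (\<lambda>k. ps_deriv k ^^ J k) f K (A(k := A k + J k)) \<noteq> 0"
      by (simp add: ps_deriv_funpow_nonzero_iff)
    also have "\<dots> \<longleftrightarrow> f (\<lambda>i. (A(k := A k + J k)) i + (if i \<in> K then J i else 0)) \<noteq> 0"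
      by (rule insert.IH)
    also have "(\<lambda>i. (A(k := A k + J k)) i + (if i \<in> K then J i else 0)) =
               (\<lambda>i. A i + (if i \<in> insert k K then J i else 0))"
      using insert.hyps by (auto simp: fun_eq_iff)
    finally show ?case .
  qed
  from this[of UNIV] show ?thesis by (simp add: Theta_def)
qed

lemma Supp_Theta:
  fixes f :: "('m::finite, 'k::field_char_0) ps"
  shows "Supp (Theta J f) = Theta_trop J (Supp f)"
proof (intro set_eqI iffI)
  fix A assume "A \<in> Supp (Theta J f)"
  then show "A \<in> Theta_trop J (Supp f)"
    unfolding Theta_trop_def Supp_def Theta_nonzero_iff
    by (intro CollectI exI[of _ "\<lambda>i. A i + J i"]) auto
next
  fix A assume "A \<in> Theta_trop J (Supp f)"
  then obtain s where "A = (\<lambda>i. s i - J i)" "f s \<noteq> 0" "\<forall>i. J i \<le> s i"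
    unfolding Theta_trop_def Supp_def by auto
  moreover from this have "(\<lambda>i. A i + J i) = s" by auto
  ultimately show "A \<in> Supp (Theta J f)"
    unfolding Supp_def Theta_nonzero_iff by auto
qed

section \<open>Vertices of Newton polyhedra and weights\<close>

lemma inner_embed: "inner a (embed x) = (\<Sum>k\<in>UNIV. a$k * real (x k))"
  unfolding inner_vec_def embed_def by simp

lemma embed_add: "embed (\<lambda>i. a i + b i) = embed a + embed b"
  unfolding embed_def vec_eq_iff by simp

lemma Vert_subset: "Vert X \<subseteq> X"
  unfolding Vert_def by auto

lemma Vert_of_subset:
  assumes "J \<in> Vert U" "J \<in> A" "A \<subseteq> U"
  shows "J \<in> Vert A"
proof -
  have "Newton (A - {J}) \<subseteq> Newton (U - {J})"
    unfolding Newton_def using assms(3) by (intro hull_mono) blast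
  with assms show ?thesis unfolding Vert_def by auto
qed

lemma unique_minimizer_imp_Vert:
  assumes "unique_minimizer v X a"
  shows "a \<in> Vert X"
proof -
  define w :: "real^'a" where "w = (\<chi> k. real (v k))"
  have inner_w: "inner w (embed x) = real (weight v x)" for x
    unfolding w_def inner_embed weight_def by simp
  let ?H = "{p. real (weight v a) < inner w p}"
  have "{embed (\<lambda>i. x i + d i) | x d. x \<in> X - {a}} \<subseteq> ?H"
    using assms unfolding unique_minimizer_def by (auto simp: inner_w weight_add)
  then have "Newton (X - {a}) \<subseteq> ?H"
    unfolding Newton_def by (intro hull_minimal convex_halfspace_gt)
  with assms show ?thesis
    unfolding Vert_def unique_minimizer_def by (auto simp: inner_w)
qed

lemma Dickson_on_coordinates:
  fixes X :: "('m \<Rightarrow> nat) set"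
  assumes "finite K"
  shows "\<exists>F. finite F \<and> F \<subseteq> X \<and> (\<forall>x\<in>X. \<exists>f\<in>F. \<forall>i\<in>K. f i \<le> x i)"
  using assms
proof (induction K arbitrary: X rule: finite_induct)
  case empty
  show ?case
  proof (cases "X = {}")
    case False
    then obtain x0 where "x0 \<in> X" by blast
    then show ?thesis by (intro exI[of _ "{x0}"]) auto
  qed auto
next
  case (insert k K)
  obtain F0 where F0: "finite F0" "F0 \<subseteq> X" "\<forall>x\<in>X. \<exists>f\<in>F0. \<forall>i\<in>K. f i \<le> x i"
    using insert.IH[of X] by blast
  have "\<forall>c. \<exists>F. finite F \<and> F \<subseteq> {x\<in>X. x k = c} \<and>
          (\<forall>x\<in>{x\<in>X. x k = c}. \<exists>f\<in>F. \<forall>i\<in>K. f i \<le> x i)"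
    using insert.IH by blast
  from choice[OF this] obtain Fv where Fv: "\<forall>c. finite (Fv c) \<and> Fv c \<subseteq> {x\<in>X. x k = c} \<and>
      (\<forall>x\<in>{x\<in>X. x k = c}. \<exists>f\<in>Fv c. \<forall>i\<in>K. f i \<le> x i)"
    by blast
  define N where "N = (\<Sum>f\<in>F0. f k)"
  define F where "F = F0 \<union> (\<Union>c<N. Fv c)"
  have "\<exists>f\<in>F. \<forall>i\<in>insert k K. f i \<le> x i" if x: "x \<in> X" for x
  proof -
    obtain f where f: "f \<in> F0" "\<forall>i\<in>K. f i \<le> x i" using F0 x by blast
    show ?thesis
    proof (cases "f k \<le> x k")
      case True
      with f show ?thesis unfolding F_def by auto
    next
      case False
      \<comment> \<open>then \<open>x k\<close> is one of the finitely many values below \<open>N\<close>, covered by \<open>Fv (x k)\<close>\<close>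
      have "f k \<le> N" unfolding N_def using F0(1) f(1) by (intro member_le_sum) simp_all
      with False have "x k < N" by simp
      moreover obtain f' where "f' \<in> Fv (x k)" "\<forall>i\<in>K. f' i \<le> x i"
        using Fv x by blast
      moreover have "f' k = x k" using Fv \<open>f' \<in> Fv (x k)\<close> by blast
      ultimately show ?thesis unfolding F_def by (intro bexI[of _ f']) auto
    qed
  qed
  moreover have "finite F" "F \<subseteq> X" unfolding F_def using F0 Fv by auto
  ultimately show ?case by blast
qed

lemma Dickson:
  fixes X :: "('m::finite \<Rightarrow> nat) set"
  obtains F where "finite F" "F \<subseteq> X" "\<forall>x\<in>X. \<exists>f\<in>F. f \<le> x"
  using Dickson_on_coordinates[of "UNIV :: 'm set" X] by (auto simp: le_fun_def)

lemma nonneg_in_convex_hull_lattice: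
  fixes d :: "real^'m::finite"
  assumes "\<forall>k. 0 \<le> d$k"
  shows "d \<in> convex hull (range embed)"
proof -
  have "\<forall>d::real^'m. (\<forall>k. 0 \<le> d$k) \<longrightarrow> (\<forall>k. k \<notin> K \<longrightarrow> d$k \<in> \<int>) \<longrightarrow>
          d \<in> convex hull (range embed)" if "finite K" for K
    using that
  proof (induction K rule: finite_induct)
    case empty
    show ?case
    proof (intro allI impI)
      fix d :: "real^'m"
      assume d: "\<forall>k. 0 \<le> d$k" "\<forall>k. k \<notin> {} \<longrightarrow> d$k \<in> \<int>"
      have "d = embed (\<lambda>k. nat \<lfloor>d$k\<rfloor>)"
        unfolding embed_def vec_eq_iff using d by (auto elim!: Ints_cases)
      then show "d \<in> convex hull (range embed)" by (simp add: hull_inc)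
    qed
  next
    case (insert k K)
    \<comment> \<open>interpolate linearly between rounding the \<open>k\<close>-th coordinate down and up\<close>
    show ?case
    proof (intro allI impI)
      fix d :: "real^'m"
      assume d: "\<forall>k. 0 \<le> d$k" "\<forall>j. j \<notin> insert k K \<longrightarrow> d$j \<in> \<int>"
      define t where "t = d$k - \<lfloor>d$k\<rfloor>"
      define d1 where "d1 = (\<chi> j. if j = k then of_int \<lfloor>d$k\<rfloor> else d$j)"
      define d2 where "d2 = (\<chi> j. if j = k then of_int \<lfloor>d$k\<rfloor> + 1 else d$j)"
      have "d1 \<in> convex hull (range embed)" "d2 \<in> convex hull (range embed)"
        using insert.IH d unfolding d1_def d2_def by auto
      moreover have "0 \<le> t" "t \<le> 1"
        unfolding t_def by linarith+
      ultimately have "(1 - t) *\<^sub>R d1 + t *\<^sub>R d2 \<in> convex hull (range embed)"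
        by (intro convexD[OF convex_convex_hull]) auto
      moreover have "d = (1 - t) *\<^sub>R d1 + t *\<^sub>R d2"
        unfolding vec_eq_iff d1_def d2_def t_def by (auto simp: algebra_simps)
      ultimately show "d \<in> convex hull (range embed)" by simp
    qed
  qed
  from this[of UNIV] assms show ?thesis by simp
qed

lemma nonneg_add_embed_in_Newton:
  fixes d :: "real^'m::finite"
  assumes "\<forall>k. 0 \<le> d$k" "f \<in> X"
  shows "d + embed f \<in> Newton X"
proof -
  have "embed f + d \<in> (\<lambda>q. embed f + q) ` (convex hull (range embed))"
    using nonneg_in_convex_hull_lattice[OF assms(1)] by blast
  also have "\<dots> = convex hull ((\<lambda>q. embed f + q) ` range embed)"
    by (rule convex_hull_translation[symmetric])
  also have "\<dots> \<subseteq> Newton X"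
    unfolding Newton_def
  proof (intro hull_mono image_subsetI)
    fix q :: "real^'m" assume "q \<in> range embed"
    then obtain e where "q = embed e" by blast
    with assms(2) show "embed f + q \<in> {embed (\<lambda>i. x i + d i) | x d. x \<in> X}"
      by (intro CollectI exI[of _ f] exI[of _ e]) (simp add: embed_add)
  qed
  finally show ?thesis by (simp add: add.commute)
qed

text \<open>By Dickson's lemma the exponents dominate a finite subset \<open>F\<close>; the orthant plus the convex
  hull of \<open>F\<close> is then a closed convex set between the exponents and the Newton polyhedron, to
  which the separation theorem applies.\<close>

lemma Newton_closed_convex_core:
  fixes X :: "('m::finite \<Rightarrow> nat) set"
  obtains C where "closed C" "convex C" "C \<subseteq> Newton X" "embed ` X \<subseteq> C"
    "\<And>c d. c \<in> C \<Longrightarrow> \<forall>k. 0 \<le> d$k \<Longrightarrow> c + d \<in> C"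
proof -
  obtain F where F: "finite F" "F \<subseteq> X" "\<forall>x\<in>X. \<exists>f\<in>F. f \<le> x" by (rule Dickson)
  define Orth where "Orth = {p::real^'m. \<forall>k. 0 \<le> p$k}"
  define H where "H = convex hull (embed ` F)"
  define C where "C = (\<Union>d\<in>Orth. \<Union>c\<in>H. {d + c})"
  have "closed C" unfolding C_def Orth_def H_def
    by (intro closed_compact_sums closed_positive_orthant compact_convex_hull
          finite_imp_compact finite_imageI F)
  moreover have "convex C" unfolding C_def H_def
    by (intro convex_sums convex_convex_hull, unfold Orth_def, rule convex_box_cart)
       (simp add: atLeast_def[symmetric])
  moreover have "C \<subseteq> Newton X"
  proof
    fix p assume "p \<in> C"
    then obtain d c where dc: "d \<in> Orth" "c \<in> H" "p = d + c" unfolding C_def by blast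
    have "(\<lambda>q. d + q) ` H = convex hull ((\<lambda>q. d + q) ` embed ` F)"
      unfolding H_def by (rule convex_hull_translation[symmetric])
    also have "\<dots> \<subseteq> Newton X"
    proof (rule hull_minimal)
      show "(\<lambda>q. d + q) ` embed ` F \<subseteq> Newton X"
        using nonneg_add_embed_in_Newton[of d] dc(1) F(2) unfolding Orth_def by blast
      show "convex (Newton X)" unfolding Newton_def by (rule convex_convex_hull)
    qed
    finally show "p \<in> Newton X" using dc by blast
  qed
  moreover have "embed x \<in> C" if x: "x \<in> X" for x
  proof -
    obtain f where f: "f \<in> F" "f \<le> x" using bspec[OF F(3) x] by (elim bexE)
    have "embed x - embed f \<in> Orth"
      unfolding Orth_def embed_def using f(2) by (simp add: le_fun_def)
    moreover have "embed f \<in> H" unfolding H_def using f by (intro hull_inc) auto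
    moreover have "embed x = (embed x - embed f) + embed f" by simp
    ultimately show ?thesis unfolding C_def by blast
  qed
  moreover have "c + d \<in> C" if "c \<in> C" "\<forall>k. 0 \<le> d$k" for c d
  proof -
    obtain d' h where "d' \<in> Orth" "h \<in> H" "c = d' + h" using \<open>c \<in> C\<close> unfolding C_def by blast
    moreover from this have "d' + d \<in> Orth" using that(2) unfolding Orth_def by auto
    moreover have "c + d = (d' + d) + h" using \<open>c = d' + h\<close> by (simp add: algebra_simps)
    ultimately show ?thesis unfolding C_def by blast
  qed
  ultimately show thesis by (intro that) auto
qed

lemma Vert_separating_hyperplane:
  assumes "J \<in> Vert U"
  obtains a b where "\<forall>k. 0 \<le> a$k" "inner a (embed J) < b" "\<forall>x\<in>U - {J}. b < inner a (embed x)"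
proof (cases "U - {J} = {}")
  case True
  then show thesis by (intro that[of 0 1]) auto
next
  case False
  then obtain x0 where x0: "x0 \<in> U - {J}" by blast
  obtain C where C: "closed C" "convex C" "C \<subseteq> Newton (U - {J})" "embed ` (U - {J}) \<subseteq> C"
    "\<And>c d. c \<in> C \<Longrightarrow> \<forall>k. 0 \<le> d$k \<Longrightarrow> c + d \<in> C"
    using Newton_closed_convex_core[of "U - {J}"] by blast
  have "embed J \<notin> C" using assms C(3) unfolding Vert_def by blast
  then obtain a b where ab: "inner a (embed J) < b" "\<forall>x\<in>C. b < inner a x"
    using separating_hyperplane_closed_point[OF C(2,1)] by blast
  have "0 \<le> a$k" for k
  proof (rule ccontr)
    assume neg: "\<not> 0 \<le> a$k"
    \<comment> \<open>moving from \<open>embed x0\<close> in direction \<open>axis k 1\<close> would reach the hyperplane\<close>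
    define t where "t = (inner a (embed x0) - b) / (- a$k)"
    have "b < inner a (embed x0)" using ab(2) C(4) x0 by blast
    with neg have "0 \<le> t" unfolding t_def by (intro divide_nonneg_pos) auto
    then have "embed x0 + t *\<^sub>R axis k 1 \<in> C"
      using C(4,5) x0 by (auto simp: axis_def)
    then have "b < inner a (embed x0 + t *\<^sub>R axis k 1)" using ab(2) by blast
    also have "\<dots> = inner a (embed x0) + t * a$k"
      by (simp add: inner_add_right inner_axis)
    also have "\<dots> = b"
      using neg unfolding t_def by simp
    finally show False by simp
  qed
  with ab C(4) show thesis by (intro that) auto
qed

lemma integer_weight_of_separating_hyperplane:
  fixes a :: "real^'m::finite"
  assumes a: "\<forall>k. 0 \<le> a$k" and sep: "inner a (embed J) < b" "\<forall>x\<in>X. b < inner a (embed x)"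
  obtains W where "\<forall>k. 1 \<le> W k" "\<forall>x\<in>X. weight W J < weight W x"
proof -
  define gap where "gap = b - inner a (embed J)"
  have "0 < gap" unfolding gap_def using sep by simp
  then obtain N :: nat where N: "2 * (\<Sum>k\<in>UNIV. real (J k)) + 1 < real N * gap"
    using ex_less_of_nat_mult by blast
  \<comment> \<open>round \<open>N a\<close> up; the rounding error \<open>< 2\<close> per coordinate is absorbed by the gap\<close>
  define W where "W = (\<lambda>k. nat \<lceil>real N * a$k\<rceil> + 1)"
  have W: "real N * a$k \<le> real (W k)" "real (W k) \<le> real N * a$k + 2" for k
  proof -
    have "real (W k) = of_int \<lceil>real N * a$k\<rceil> + 1"
      using a by (simp add: W_def of_nat_nat)
    then show "real N * a$k \<le> real (W k)" "real (W k) \<le> real N * a$k + 2"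
      using le_of_int_ceiling[of "real N * a$k"] of_int_ceiling_le_add_one[of "real N * a$k"]
      by linarith+
  qed
  have real_weight: "real (weight W x) = (\<Sum>k\<in>UNIV. real (W k) * real (x k))" for x
    unfolding weight_def by simp
  have "real (weight W J) \<le> (\<Sum>k\<in>UNIV. (real N * a$k + 2) * real (J k))"
    unfolding real_weight by (intro sum_mono mult_right_mono W) auto
  also have "\<dots> = real N * inner a (embed J) + 2 * (\<Sum>k\<in>UNIV. real (J k))"
    unfolding inner_embed by (simp add: algebra_simps sum.distrib sum_distrib_left)
  also have "\<dots> < real N * b" using N unfolding gap_def by (simp add: algebra_simps)
  finally have J_below: "real (weight W J) < real N * b" .
  have "real N * b \<le> real (weight W x)" if "x \<in> X" for x
  proof -
    have "real N * b \<le> real N * inner a (embed x)"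
      using sep(2) that by (intro mult_left_mono) auto
    also have "\<dots> = (\<Sum>k\<in>UNIV. real N * a$k * real (x k))"
      unfolding inner_embed by (simp add: sum_distrib_left algebra_simps)
    also have "\<dots> \<le> real (weight W x)"
      unfolding real_weight by (intro sum_mono mult_right_mono W) auto
    finally show ?thesis .
  qed
  with J_below have "\<forall>x\<in>X. weight W J < weight W x" by fastforce
  then show thesis by (intro that) (auto simp: W_def)
qed

lemma digits_less: "\<forall>i<n. f i < (B::nat) \<Longrightarrow> (\<Sum>i<n. B^i * f i) < B^n"
proof (induction n)
  case 0
  then show ?case by simp
next
  case (Suc n)
  then have "(\<Sum>i<Suc n. B^i * f i) < B^n * (f n + 1)" by (simp add: algebra_simps)
  also have "\<dots> \<le> B^n * B" using Suc.prems by (intro mult_le_mono2) auto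
  finally show ?case by (simp add: mult.commute)
qed

lemma digits_inj:
  assumes "\<forall>i<n. f i < (B::nat) \<and> g i < B" "(\<Sum>i<n. B^i * f i) = (\<Sum>i<n. B^i * g i)"
  shows "\<forall>i<n. f i = g i"
  using assms
proof (induction n)
  case 0
  then show ?case by simp
next
  case (Suc n)
  have lf: "(\<Sum>i<n. B^i * f i) < B^n" and lg: "(\<Sum>i<n. B^i * g i) < B^n"
    using Suc.prems by (auto intro!: digits_less)
  have "((\<Sum>i<n. B^i * f i) + B^n * f n) div B^n = ((\<Sum>i<n. B^i * g i) + B^n * g n) div B^n"
    using Suc.prems(2) by simp
  moreover have "B^n \<noteq> 0" using lf by (metis less_nat_zero_code)
  ultimately have fn: "f n = g n" using lf lg by (simp add: div_less)
  with Suc.prems(2) have "(\<Sum>i<n. B^i * f i) = (\<Sum>i<n. B^i * g i)" by simp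
  with Suc.prems(1) Suc.IH have "\<forall>i<n. f i = g i" by simp
  with fn show ?case using less_Suc_eq by auto
qed

lemma coord_le_weight:
  assumes "1 \<le> W k"
  shows "x k \<le> weight W (x::'m::finite \<Rightarrow> nat)"
proof -
  have "x k \<le> W k * x k" using assms by simp
  also have "\<dots> \<le> weight W x" unfolding weight_def by (rule member_le_sum) auto
  finally show ?thesis .
qed

lemma weight_digits:
  assumes "bij_betw h (UNIV::'m::finite set) {..<n}"
  shows "weight (\<lambda>k. B ^ h k) x = (\<Sum>i<n. B^i * x (inv_into UNIV h i))"
proof -
  have "weight (\<lambda>k. B ^ h k) x = (\<Sum>k\<in>UNIV. B ^ h k * x (inv_into UNIV h (h k)))"
    unfolding weight_def using assms by (simp add: bij_betw_inv_into_left)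
  also have "\<dots> = (\<Sum>i<n. B^i * x (inv_into UNIV h i))"
    by (rule sum.reindex_bij_betw[OF assms])
  finally show ?thesis .
qed

lemma weight_digits_less:
  assumes "bij_betw h (UNIV::'m::finite set) {..<n}" "\<forall>k. x k < B"
  shows "weight (\<lambda>k. B ^ h k) x < B ^ n"
  unfolding weight_digits[OF assms(1)] using assms(2) by (intro digits_less) auto

lemma weight_digits_inj:
  assumes h: "bij_betw h (UNIV::'m::finite set) {..<n}" and "\<forall>k. x k < B" "\<forall>k. y k < B"
    and "weight (\<lambda>k. B ^ h k) x = weight (\<lambda>k. B ^ h k) y"
  shows "x = y"
proof
  fix k
  have "\<forall>i<n. x (inv_into UNIV h i) = y (inv_into UNIV h i)"
    using assms unfolding weight_digits[OF h] by (intro digits_inj) auto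
  moreover have "h k < n" using h by (auto simp: bij_betw_def)
  ultimately show "x k = y k" using h by (metis bij_betw_inv_into_left UNIV_I)
qed

text \<open>Perturbing \<open>Q W\<close> by the base-\<open>B\<close> digit weight \<open>k \<mapsto> B ^ h k\<close> separates all points of small
  weight, while \<open>Q\<close> is large enough that the order given by \<open>W\<close> is preserved.\<close>
lemma generic_weight:
  fixes U :: "('m::finite \<Rightarrow> nat) set"
  assumes W: "\<forall>k. 1 \<le> W k" "unique_minimizer W U J"
  obtains v where "unique_minimizer v U J" "inj_on (weight v) {x. weight v x \<le> weight v J}"
proof -
  define n where "n = CARD('m)"
  obtain h where h: "bij_betw h (UNIV::'m set) {..<n}"
    using ex_bij_betw_finite_nat[of "UNIV::'m set"] unfolding n_def atLeast0LessThan by auto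
  define c where "c = weight W J"
  define B where "B = Suc c"
  define Q where "Q = B ^ n"
  define e where "e = (\<lambda>k. B ^ h k)"
  define v where "v = (\<lambda>k. Q * W k + e k)"
  have weight_v: "weight v x = Q * weight W x + weight e x" for x
    unfolding v_def weight_def by (simp add: distrib_right sum.distrib sum_distrib_left mult.assoc)
  have digits_small: "\<forall>k. x k < B" if "weight W x \<le> c" for x
    unfolding B_def using coord_le_weight W(1) that by (meson le_imp_less_Suc order_trans)
  have e_small: "weight e x < Q" if "weight W x \<le> c" for x
    unfolding e_def Q_def using h digits_small[OF that] by (rule weight_digits_less)
  have J_below: "weight v J < Q * (c + 1)"
    using e_small[of J] unfolding weight_v c_def by simp
  have "unique_minimizer v U J"
    unfolding unique_minimizer_def
  proof (intro conjI ballI impI)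
    show "J \<in> U" using W(2) unfolding unique_minimizer_def by blast
  next
    fix x assume "x \<in> U" "x \<noteq> J"
    then have "c + 1 \<le> weight W x" using W(2) unfolding unique_minimizer_def c_def by auto
    then have "Q * (c + 1) \<le> weight v x" unfolding weight_v by (metis mult_le_mono2 trans_le_add1)
    with J_below show "weight v J < weight v x" by simp
  qed
  moreover have "inj_on (weight v) {x. weight v x \<le> weight v J}"
  proof (rule inj_onI)
    fix x y assume x: "x \<in> {x. weight v x \<le> weight v J}" and y: "y \<in> {x. weight v x \<le> weight v J}"
      and xy: "weight v x = weight v y"
    have small: "weight W z \<le> c" if "weight v z \<le> weight v J" for z
    proof -
      have "Q * weight W z < Q * (c + 1)"
        using that J_below unfolding weight_v by linarith
      then have "weight W z < c + 1" by (simp only: mult_less_cancel1)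
      then show ?thesis by simp
    qed
    have "(Q * weight W x + weight e x) mod Q = (Q * weight W y + weight e y) mod Q"
      using xy unfolding weight_v by simp
    then have "weight e x = weight e y"
      using e_small[OF small] x y by simp
    then show "x = y"
      unfolding e_def using weight_digits_inj[OF h] digits_small[OF small] x y by blast
  qed
  ultimately show thesis by (rule that)
qed

lemma vertex_generic_weight:
  assumes "J \<in> Vert U"
  obtains v where "unique_minimizer v U J" "inj_on (weight v) {x. weight v x \<le> weight v J}"
proof -
  obtain a b where "\<forall>k. 0 \<le> a$k" "inner a (embed J) < b" "\<forall>x\<in>U - {J}. b < inner a (embed x)"
    using Vert_separating_hyperplane[OF assms] by blast
  then obtain W where "\<forall>k. 1 \<le> W k" "\<forall>x\<in>U - {J}. weight W J < weight W x"
    by (rule integer_weight_of_separating_hyperplane)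
  moreover have "J \<in> U" using assms Vert_subset by blast
  ultimately have "\<forall>k. 1 \<le> W k" "unique_minimizer W U J"
    unfolding unique_minimizer_def by auto
  then show thesis using that by (rule generic_weight)
qed

lemma Supp_mono_eval_subset:
  assumes "finite (mono_supp M)"
  shows "Supp (mono_eval M \<phi>) \<subseteq>
           msum_fin (mono_supp M) (\<lambda>p. kfold (M p) (Supp (Theta (snd p) (\<phi> (fst p)))))"
proof -
  let ?F = "\<lambda>p. Theta (snd p) (\<phi> (fst p))"
  have "Supp (mono_eval M \<phi>) \<subseteq> msum_fin (mono_supp M) (\<lambda>p. Supp (ps_pow (?F p) (M p)))"
    unfolding mono_eval_def using assms by (rule Supp_ps_prod_subset)
  also have "\<dots> \<subseteq> msum_fin (mono_supp M) (\<lambda>p. kfold (M p) (Supp (?F p)))"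
    by (rule msum_fin_mono, rule Supp_ps_pow_subset)
  finally show ?thesis .
qed

lemma unique_minimizer_mono_eval:
  fixes \<phi> :: "'n \<Rightarrow> ('m::finite, 'k::idom) ps"
  assumes fin: "finite (mono_supp M)"
    and t: "unique_minimizer v (msum_fin (mono_supp M) (\<lambda>p. kfold (M p) (Supp (Theta (snd p) (\<phi> (fst p)))))) t"
  shows "unique_minimizer v (Supp (mono_eval M \<phi>)) t"
proof -
  let ?F = "\<lambda>p. Theta (snd p) (\<phi> (fst p))"
  obtain g where g: "\<forall>p\<in>mono_supp M. unique_minimizer v (kfold (M p) (Supp (?F p))) (g p)"
    "t = (\<lambda>i. \<Sum>p\<in>mono_supp M. g p i)"
    using unique_minimizer_msum_finD[OF fin t] by blast
  have "unique_minimizer v (Supp (ps_pow (?F p) (M p))) (g p)" if p: "p \<in> mono_supp M" for p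
  proof -
    have "0 < M p" using p by (simp add: mono_supp_def)
    then obtain b where "unique_minimizer v (Supp (?F p)) b" "g p = (\<lambda>i. M p * b i)"
      using unique_minimizer_kfoldD g(1) p by blast
    then show ?thesis by (simp add: unique_minimizer_ps_pow)
  qed
  then show ?thesis
    unfolding mono_eval_def g(2) using fin by (intro unique_minimizer_ps_prod) auto
qed

lemma term_coeff_nonzero_iff:
  fixes \<alpha> :: "('m::finite, 'k::field_char_0) ps" and \<phi> :: "'n \<Rightarrow> ('m, 'k) ps"
  assumes J: "unique_minimizer v U J" "inj_on (weight v) {x. weight v x \<le> weight v J}"
    and fin: "finite (mono_supp M)"
    and term_in_U: "msum (trop_ps \<alpha>) (trop_mono_eval M (\<lambda>i. Supp (\<phi> i))) \<subseteq> U"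
  shows "J \<in> msum (trop_ps \<alpha>) (trop_mono_eval M (\<lambda>i. Supp (\<phi> i))) \<longleftrightarrow>
         ps_mult \<alpha> (mono_eval M \<phi>) J \<noteq> 0"
proof -
  let ?T = "msum_fin (mono_supp M) (\<lambda>p. kfold (M p) (Supp (Theta (snd p) (\<phi> (fst p)))))"
  let ?c = "ps_mult \<alpha> (mono_eval M \<phi>)"
  have trop_term: "msum (trop_ps \<alpha>) (trop_mono_eval M (\<lambda>i. Supp (\<phi> i))) =
                   msum (Vert (Supp \<alpha>)) (Vert ?T)"
    unfolding trop_mono_eval_def trop_ps_def by (simp add: Supp_Theta)
  \<comment> \<open>the lowest point of \<open>msum (Supp \<alpha>) ?T\<close> is a vertex of the term and the lowest exponent of
    \<open>?c\<close>; lying below \<open>J\<close> in \<open>U\<close>, it must be \<open>J\<close> itself\<close>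
  have lowest: "J \<in> msum (Vert (Supp \<alpha>)) (Vert ?T) \<and> ?c J \<noteq> 0"
    if y: "y \<in> msum (Supp \<alpha>) ?T" "weight v y \<le> weight v J" for y
  proof -
    obtain z where z: "unique_minimizer v (msum (Supp \<alpha>) ?T) z" "weight v z \<le> weight v y"
      using unique_minimizer_exists[OF y J(2)] by blast
    then obtain a t where at: "unique_minimizer v (Supp \<alpha>) a" "unique_minimizer v ?T t"
      "z = (\<lambda>i. a i + t i)"
      by (elim unique_minimizer_msumD)
    then have "unique_minimizer v (Supp ?c) z"
      using fin by (simp add: unique_minimizer_ps_mult unique_minimizer_mono_eval)
    moreover have "z \<in> msum (Vert (Supp \<alpha>)) (Vert ?T)"
      using at unique_minimizer_imp_Vert unfolding msum_def by blast
    moreover from this have "z \<in> U"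
      using term_in_U unfolding trop_term by blast
    with J(1) z(2) y(2) have "z = J"
      unfolding unique_minimizer_def by (meson le_trans leD)
    ultimately show ?thesis unfolding unique_minimizer_def Supp_def by auto
  qed
  show ?thesis
  proof
    assume "J \<in> msum (trop_ps \<alpha>) (trop_mono_eval M (\<lambda>i. Supp (\<phi> i)))"
    then have "J \<in> msum (Supp \<alpha>) ?T"
      unfolding trop_term using msum_mono[OF Vert_subset Vert_subset] by blast
    then show "?c J \<noteq> 0" using lowest by blast
  next
    assume "?c J \<noteq> 0"
    then have "J \<in> msum (Supp \<alpha>) ?T"
      using Supp_ps_mult_subset msum_mono[OF order_refl Supp_mono_eval_subset[OF fin]]
      unfolding Supp_def by blast
    then show "J \<in> msum (trop_ps \<alpha>) (trop_mono_eval M (\<lambda>i. Supp (\<phi> i)))"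
      using lowest unfolding trop_term by blast
  qed
qed

lemma trop_solution_if_eval_zero:
  fixes P :: "('n, 'm::finite, 'k::field_char_0) dpoly" and \<phi> :: "'n \<Rightarrow> ('m, 'k) ps"
  assumes P: "is_dpoly P" and eval: "dp_eval P \<phi> = ps_zero"
  shows "trop_solution P (\<lambda>i. Supp (\<phi> i))"
  unfolding trop_solution_def
proof
  let ?S = "\<lambda>i. Supp (\<phi> i)"
  let ?term = "\<lambda>M. msum (trop_ps (P M)) (trop_mono_eval M ?S)"
  define U where "U = (\<Union>M\<in>dsupp P. ?term M)"
  fix J assume "J \<in> trop_eval P ?S"
  then have JU: "J \<in> Vert U" unfolding trop_eval_def U_def .
  let ?c = "\<lambda>M. ps_mult (P M) (mono_eval M \<phi>) J"
  obtain v where v: "unique_minimizer v U J" "inj_on (weight v) {x. weight v x \<le> weight v J}"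
    using vertex_generic_weight[OF JU] by blast
  have iff: "J \<in> ?term M \<longleftrightarrow> ?c M \<noteq> 0" if "M \<in> dsupp P" for M
    using P that unfolding is_dpoly_def by (intro term_coeff_nonzero_iff[OF v]) (auto simp: U_def)
  define Good where "Good = {M \<in> dsupp P. J \<in> ?term M}"
  have "(\<Sum>M\<in>Good. ?c M) = (\<Sum>M\<in>dsupp P. ?c M)"
    using P iff unfolding is_dpoly_def Good_def by (intro sum.mono_neutral_left) auto
  also have "\<dots> = 0"
    using fun_cong[OF eval, of J] by (simp add: dp_eval_def ps_zero_def)
  finally have sum_Good: "(\<Sum>M\<in>Good. ?c M) = 0" .
  obtain M1 where M1: "M1 \<in> Good"
    using JU Vert_subset unfolding Good_def U_def by blast
  have "\<exists>M2\<in>Good. M2 \<noteq> M1"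
  proof (rule ccontr)
    assume "\<not> (\<exists>M2\<in>Good. M2 \<noteq> M1)"
    with M1 have "Good = {M1}" by blast
    with sum_Good iff M1 show False unfolding Good_def by auto
  qed
  then obtain M2 where M2: "M2 \<in> Good" "M2 \<noteq> M1" by blast
  have "J \<in> trop_term_eval P M ?S" if "M \<in> Good" for M
    unfolding trop_term_eval_def using that
    by (intro Vert_of_subset[OF JU]) (auto simp: Good_def U_def)
  with M1 M2 show "\<exists>M1\<in>dsupp P. \<exists>M2\<in>dsupp P. M1 \<noteq> M2 \<and>
      J \<in> trop_term_eval P M1 ?S \<and> J \<in> trop_term_eval P M2 ?S"
    unfolding Good_def by blast
qed

theorem mainTheorem10:
  fixes G :: "('n::finite, 'm::finite, 'k::field_char_0) dpoly set"
    and \<phi> :: "'n \<Rightarrow> ('m, 'k) ps"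
  assumes "alg_closed_field TYPE('k)"
    and "differential_ideal G"
    and "\<forall>P\<in>G. dp_eval P \<phi> = ps_zero"
  shows "\<forall>P\<in>G. trop_solution P (\<lambda>i. Supp (\<phi> i))"
proof
  fix P assume "P \<in> G"
  with assms(2) have "is_dpoly P" unfolding differential_ideal_def by blast
  with assms(3) \<open>P \<in> G\<close> show "trop_solution P (\<lambda>i. Supp (\<phi> i))"
    by (simp add: trop_solution_if_eval_zero)
qed

end
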